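(* Let $n\in\mathbb{N}$ and suppose $0<y_{\ell}<1$ and $0<q_{\ell}<1$ for all $1\le\ell\le n$. Then the function \[ F(x)=\prod_{\ell=1}^{n}\frac{\exp\left(\frac{x^{2}}{\log q_{\ell}^{4}}\right)}{\left(y_{\ell}e^{ix};q_{\ell}\right)_{\infty}},\qquad x\in\mathbb{R}, \] is a positive definite function. Furthermore, for all $m\in\mathbb{N}$ and all $x_{1},\dots,x_{m}\in\mathbb{R}$, the matrices \[ \left(\prod_{\ell=1}^{n}\frac{\exp\left(\frac{(x_{j}-x_{k})^{2}}{\log q_{\ell}^{4}}\right)}{\left(y_{\ell}e^{i(x_{j}-x_{k})};q_{\ell}\right)_{\infty}}\right)_{j,k=1}^{m} \] are positive semidefinite. In particular, \[ \prod_{\ell=1}^{n}\frac{\left(y_{\ell};q_{\ell}\right)_{\infty}}{\left|\left(y_{\ell}e^{ix};q_{\ell}\right)_{\infty}\right|}\exp\left(\frac{x^{2}}{\log q_{\ell}^{4}}\right)\le1,\qquad x\in\mathbb{R}. \]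
   Context: For $0<q<1$ and $a\in\mathbb{C}$, $(a;q)_{\infty}=\prod_{k=0}^{\infty}(1-aq^{k})$. Here $\log q^{4}=4\log q$. A continuous function $f:\mathbb{R}\to\mathbb{C}$ with $f(0)>0$ is called positive definite if for every $n\in\mathbb{N}$ and all $x_{1},\dots,x_{n}\in\mathbb{R}$ the matrix $(f(x_{j}-x_{k}))_{j,k=1}^{n}$ is positive semidefinite, i.e. $\sum_{j,k}f(x_j-x_k)z_j\overline{z_k}\ge0$ for all $z_1,\dots,z_n\in\mathbb{C}$ (equivalently, by Bochner's theorem, $f$ is the Fourier transform of a finite positive measure on $\mathbb{R}$ of total mass $f(0)$). *)

theory Defs
  imports "HOL-Analysis.Analysis"
begin

definition qpoch_inf :: "complex \<Rightarrow> real \<Rightarrow> complex" where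
  "qpoch_inf a q = (\<Prod>k. 1 - a * complex_of_real q ^ k)"

definition positive_definite :: "(real \<Rightarrow> complex) \<Rightarrow> bool" where
  "positive_definite f \<longleftrightarrow> continuous_on UNIV f \<and> Im (f 0) = 0 \<and> Re (f 0) > 0 \<and>
     (\<forall>(m::nat) (xs::nat \<Rightarrow> real) (z::nat \<Rightarrow> complex).
        (\<Sum>j<m. \<Sum>k<m. f (xs j - xs k) * z j * cnj (z k)) \<in> \<real> \<and>
        Re (\<Sum>j<m. \<Sum>k<m. f (xs j - xs k) * z j * cnj (z k)) \<ge> 0)"

end

theory Submission
  imports Defs "HOL-Real_Asymp.Real_Asymp"
begin

text \<open>
  Call \<open>h\<close> a multiplier if \<open>h \<cdot> g\<close> is positive semidefinite whenever \<open>g\<close> is. A character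
  \<open>x \<mapsto> e\<^sup>i\<^sup>t\<^sup>x\<close> is a multiplier, since it only rotates the coefficient vector of the quadratic
  form, and multipliers are closed under sums, nonnegative scaling, products and pointwise
  limits. Hence \<open>1 / (1 - b e\<^sup>i\<^sup>x) = \<Sum>\<^sub>j b\<^sup>j e\<^sup>i\<^sup>j\<^sup>x\<close> for \<open>0 \<le> b < 1\<close>, its products
  \<open>1 / (y e\<^sup>i\<^sup>x; q)\<^sub>\<infinity>\<close>, and the Gaussians \<open>exp (-a x\<^sup>2) = lim cos (\<surd>(2a/N) x)\<^sup>N\<close> are
  multipliers, and so is \<open>F\<close>; applying it to the constant \<open>1\<close> shows that \<open>F\<close> is positive
  semidefinite. The inequality holds factorwise: \<open>|1 - y e\<^sup>i\<^sup>x q\<^sup>k| \<ge> 1 - y q\<^sup>k\<close> and the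
  Gaussian factor is at most \<open>1\<close> because \<open>log q < 0\<close>.
\<close>

lemma convergent_prod_qpoch:
  fixes a :: complex
  assumes "0 < q" "q < 1"
  shows "convergent_prod (\<lambda>k. 1 - a * complex_of_real q ^ k)"
proof -
  have "summable (\<lambda>k. norm a * q ^ k)"
    using assms by (intro summable_mult summable_geometric) auto
  then have "summable (\<lambda>k. norm ((1 - a * complex_of_real q ^ k) - 1))"
    using assms by (simp add: norm_mult norm_power)
  then show ?thesis
    by (intro abs_convergent_prod_imp_convergent_prod summable_imp_abs_convergent_prod)
qed

lemma qpoch_inf_LIMSEQ:
  assumes "0 < q" "q < 1"
  shows "(\<lambda>n. \<Prod>k<n. 1 - a * complex_of_real q ^ k) \<longlonglongrightarrow> qpoch_inf a q"
proof -
  have "(\<lambda>n. \<Prod>k<Suc n. 1 - a * complex_of_real q ^ k) \<longlonglongrightarrow> qpoch_inf a q"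
    using convergent_prod_LIMSEQ[OF convergent_prod_qpoch[OF assms]]
    by (simp add: qpoch_inf_def lessThan_Suc_atMost)
  then show ?thesis
    by (rule LIMSEQ_imp_Suc)
qed

lemma qpoch_inf_nonzero:
  assumes "0 < q" "q < 1" "norm a < 1"
  shows "qpoch_inf a q \<noteq> 0"
  unfolding qpoch_inf_def
proof (rule prodinf_nonzero[OF convergent_prod_qpoch[OF assms(1,2)]])
  fix k
  have "norm (a * complex_of_real q ^ k) \<le> norm a"
    using assms by (simp add: norm_mult norm_power mult_left_le power_le_one)
  then show "1 - a * complex_of_real q ^ k \<noteq> 0"
    using assms(3) by auto
qed

lemma continuous_on_qpoch_inf:
  assumes "0 < q" "q < 1"
  shows "continuous_on (cball 0 1) (\<lambda>a. qpoch_inf a q)"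
proof -
  have "uniformly_convergent_on (cball 0 1) (\<lambda>N a. \<Prod>k<N. 1 - a * complex_of_real q ^ k)"
  proof (rule uniformly_convergent_on_prod')
    show "uniformly_convergent_on (cball 0 1)
            (\<lambda>N a. \<Sum>k<N. norm ((1 - a * complex_of_real q ^ k) - 1))"
    proof (rule Weierstrass_m_test'[where M = "\<lambda>k. q ^ k"])
      show "norm (norm ((1 - a * complex_of_real q ^ k) - 1)) \<le> q ^ k"
        if "a \<in> cball 0 1" for k a
        using that assms by (simp add: norm_mult norm_power mult_left_le_one_le)
      show "summable (\<lambda>k. q ^ k)"
        using assms by (intro summable_geometric) auto
    qed
  qed (auto intro!: continuous_intros)
  then obtain l where l: "uniform_limit (cball 0 1) (\<lambda>N a. \<Prod>k<N. 1 - a * complex_of_real q ^ k) l sequentially"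
    unfolding uniformly_convergent_on_def by blast
  have "continuous_on (cball 0 1) l"
    by (rule uniform_limit_theorem[OF _ l]) (auto intro!: always_eventually continuous_intros)
  moreover have "l a = qpoch_inf a q" if "a \<in> cball 0 1" for a
    using LIMSEQ_unique[OF tendsto_uniform_limitI[OF l that] qpoch_inf_LIMSEQ[OF assms]] .
  ultimately show ?thesis
    using continuous_on_cong[of "cball 0 1" "cball 0 1" l "\<lambda>a. qpoch_inf a q"] by simp
qed

lemma continuous_on_qpoch_inf_cis:
  assumes "\<bar>y\<bar> \<le> 1" "0 < q" "q < 1"
  shows "continuous_on UNIV (\<lambda>x. qpoch_inf (complex_of_real y * cis x) q)"
  by (rule continuous_on_compose2[OF continuous_on_qpoch_inf[OF assms(2,3)]])
     (use assms(1) in \<open>auto intro!: continuous_intros simp: norm_mult\<close>)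

lemma qpoch_partial_of_real:
  "(\<Prod>k<n. 1 - complex_of_real y * complex_of_real q ^ k) = complex_of_real (\<Prod>k<n. 1 - y * q ^ k)"
  by simp

lemma qpoch_inf_of_real_in_Reals:
  assumes "0 < q" "q < 1"
  shows "qpoch_inf (complex_of_real y) q \<in> \<real>"
  by (rule Lim_in_closed_set[OF closed_complex_Reals _ _ qpoch_inf_LIMSEQ[OF assms]])
     (simp_all only: qpoch_partial_of_real Reals_of_real eventually_True trivial_limit_sequentially not_False_eq_True)

lemma Re_qpoch_inf_norm_le:
  assumes "0 < q" "q < 1" "norm a \<le> 1"
  shows "Re (qpoch_inf (complex_of_real (norm a)) q) \<le> norm (qpoch_inf a q)"
proof (rule LIMSEQ_le)
  show "(\<lambda>n. Re (\<Prod>k<n. 1 - complex_of_real (norm a) * complex_of_real q ^ k))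
          \<longlonglongrightarrow> Re (qpoch_inf (complex_of_real (norm a)) q)"
    by (intro tendsto_intros qpoch_inf_LIMSEQ assms)
  show "(\<lambda>n. norm (\<Prod>k<n. 1 - a * complex_of_real q ^ k)) \<longlonglongrightarrow> norm (qpoch_inf a q)"
    by (intro tendsto_intros qpoch_inf_LIMSEQ assms)
  show "\<exists>N. \<forall>n\<ge>N. Re (\<Prod>k<n. 1 - complex_of_real (norm a) * complex_of_real q ^ k)
                     \<le> norm (\<Prod>k<n. 1 - a * complex_of_real q ^ k)"
  proof (intro exI allI impI)
    fix n
    have "Re (\<Prod>k<n. 1 - complex_of_real (norm a) * complex_of_real q ^ k) = (\<Prod>k<n. 1 - norm a * q ^ k)"
      by (simp only: qpoch_partial_of_real Re_complex_of_real)
    also have "\<dots> \<le> (\<Prod>k<n. norm (1 - a * complex_of_real q ^ k))"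
    proof (rule prod_mono)
      fix k
      have aq: "norm (a * complex_of_real q ^ k) = norm a * q ^ k"
        using assms by (simp add: norm_mult norm_power)
      have "norm a * q ^ k \<le> 1"
        using assms by (simp add: mult_le_one power_le_one)
      then show "0 \<le> 1 - norm a * q ^ k \<and> 1 - norm a * q ^ k \<le> norm (1 - a * complex_of_real q ^ k)"
        using norm_triangle_ineq2[of 1 "a * complex_of_real q ^ k"] aq by simp
    qed
    also have "\<dots> = norm (\<Prod>k<n. 1 - a * complex_of_real q ^ k)"
      by (simp add: prod_norm)
    finally show "Re (\<Prod>k<n. 1 - complex_of_real (norm a) * complex_of_real q ^ k)
                    \<le> norm (\<Prod>k<n. 1 - a * complex_of_real q ^ k)" .
  qed
qed

lemma Re_qpoch_inf_of_real_pos: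
  assumes "0 \<le> y" "y < 1" "0 < q" "q < 1"
  shows "0 < Re (qpoch_inf (complex_of_real y) q)"
proof -
  have "0 \<le> Re (qpoch_inf (complex_of_real y) q)"
  proof (rule LIMSEQ_le_const)
    show "(\<lambda>n. Re (\<Prod>k<n. 1 - complex_of_real y * complex_of_real q ^ k))
            \<longlonglongrightarrow> Re (qpoch_inf (complex_of_real y) q)"
      by (intro tendsto_intros qpoch_inf_LIMSEQ assms)
    have "0 \<le> (\<Prod>k<n. 1 - y * q ^ k)" for n
      using assms by (intro prod_nonneg) (simp add: mult_le_one power_le_one)
    then show "\<exists>N. \<forall>n\<ge>N. 0 \<le> Re (\<Prod>k<n. 1 - complex_of_real y * complex_of_real q ^ k)"
      by (simp only: qpoch_partial_of_real Re_complex_of_real) blast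
  qed
  moreover have "qpoch_inf (complex_of_real y) q \<noteq> 0"
    using assms by (intro qpoch_inf_nonzero) auto
  ultimately show ?thesis
    using qpoch_inf_of_real_in_Reals[OF assms(3,4), of y]
    by (auto simp: complex_eq_iff elim!: Reals_cases)
qed

definition toeplitz_form :: "(real \<Rightarrow> complex) \<Rightarrow> nat \<Rightarrow> (nat \<Rightarrow> real) \<Rightarrow> (nat \<Rightarrow> complex) \<Rightarrow> complex"
  where "toeplitz_form f m xs z = (\<Sum>j<m. \<Sum>k<m. f (xs j - xs k) * z j * cnj (z k))"

definition positive_semidefinite :: "(real \<Rightarrow> complex) \<Rightarrow> bool"
  where "positive_semidefinite f \<longleftrightarrow>
    (\<forall>m xs z. toeplitz_form f m xs z \<in> \<real> \<and> 0 \<le> Re (toeplitz_form f m xs z))"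

definition pd_multiplier :: "(real \<Rightarrow> complex) \<Rightarrow> bool"
  where "pd_multiplier h \<longleftrightarrow>
    (\<forall>g. positive_semidefinite g \<longrightarrow> positive_semidefinite (\<lambda>x. h x * g x))"

lemma positive_semidefinite_const_one: "positive_semidefinite (\<lambda>_. 1)"
proof -
  have "toeplitz_form (\<lambda>_. 1) m xs z = (\<Sum>j<m. z j) * cnj (\<Sum>j<m. z j)" for m xs z
    by (simp add: toeplitz_form_def sum_product cnj_sum)
  then have "toeplitz_form (\<lambda>_. 1) m xs z = complex_of_real ((norm (\<Sum>j<m. z j))\<^sup>2)" for m xs z
    by (simp only: complex_norm_square)
  then show ?thesis
    unfolding positive_semidefinite_def by simp
qed

lemma pd_multiplier_const_one: "pd_multiplier (\<lambda>_. 1)"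
  unfolding pd_multiplier_def by simp

lemma pd_multiplier_zero: "pd_multiplier (\<lambda>_. 0)"
  by (simp add: pd_multiplier_def positive_semidefinite_def toeplitz_form_def)

lemma pd_multiplier_imp_positive_semidefinite:
  assumes "pd_multiplier h"
  shows "positive_semidefinite h"
  using assms positive_semidefinite_const_one unfolding pd_multiplier_def by fastforce

lemma positive_semidefinite_LIMSEQ:
  assumes "\<And>x. (\<lambda>N. f N x) \<longlonglongrightarrow> g x" and "\<And>N. positive_semidefinite (f N)"
  shows "positive_semidefinite g"
  unfolding positive_semidefinite_def
proof (intro allI conjI)
  fix m xs z
  have lim: "(\<lambda>N. toeplitz_form (f N) m xs z) \<longlonglongrightarrow> toeplitz_form g m xs z"
    unfolding toeplitz_form_def by (intro tendsto_intros assms)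
  show "toeplitz_form g m xs z \<in> \<real>"
    by (rule Lim_in_closed_set[OF closed_complex_Reals _ _ lim])
       (use assms(2) in \<open>auto simp: positive_semidefinite_def\<close>)
  show "0 \<le> Re (toeplitz_form g m xs z)"
    by (rule LIMSEQ_le_const[OF tendsto_Re[OF lim]])
       (use assms(2) in \<open>auto simp: positive_semidefinite_def\<close>)
qed

lemma pd_multiplier_LIMSEQ:
  assumes "\<And>x. (\<lambda>N. h N x) \<longlonglongrightarrow> g x" and "\<And>N. pd_multiplier (h N)"
  shows "pd_multiplier g"
  unfolding pd_multiplier_def
proof (intro allI impI)
  fix f assume f: "positive_semidefinite f"
  show "positive_semidefinite (\<lambda>x. g x * f x)"
  proof (rule positive_semidefinite_LIMSEQ)
    show "(\<lambda>N. h N x * f x) \<longlonglongrightarrow> g x * f x" for x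
      by (intro tendsto_mult_right assms(1))
    show "positive_semidefinite (\<lambda>x. h N x * f x)" for N
      using assms(2)[of N] f unfolding pd_multiplier_def by blast
  qed
qed

lemma pd_multiplier_cis: "pd_multiplier (\<lambda>x. cis (t * x))"
  unfolding pd_multiplier_def positive_semidefinite_def
proof (intro allI impI)
  fix g m xs z
  assume g: "\<forall>m xs z. toeplitz_form g m xs z \<in> \<real> \<and> 0 \<le> Re (toeplitz_form g m xs z)"
  have "toeplitz_form (\<lambda>x. cis (t * x) * g x) m xs z = toeplitz_form g m xs (\<lambda>j. z j * cis (t * xs j))"
    unfolding toeplitz_form_def
    by (intro sum.cong refl) (simp add: cis_cnj cis_mult right_diff_distrib mult_ac)
  then show "toeplitz_form (\<lambda>x. cis (t * x) * g x) m xs z \<in> \<real> \<and>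
      0 \<le> Re (toeplitz_form (\<lambda>x. cis (t * x) * g x) m xs z)"
    using g by auto
qed

lemma pd_multiplier_add:
  assumes "pd_multiplier h1" "pd_multiplier h2"
  shows "pd_multiplier (\<lambda>x. h1 x + h2 x)"
proof -
  have "toeplitz_form (\<lambda>x. (h1 x + h2 x) * g x) m xs z
        = toeplitz_form (\<lambda>x. h1 x * g x) m xs z + toeplitz_form (\<lambda>x. h2 x * g x) m xs z" for g m xs z
    by (simp add: toeplitz_form_def distrib_right sum.distrib)
  then show ?thesis
    using assms unfolding pd_multiplier_def positive_semidefinite_def by simp
qed

lemma pd_multiplier_scale:
  assumes "pd_multiplier h" "0 \<le> c"
  shows "pd_multiplier (\<lambda>x. complex_of_real c * h x)"
proof -
  have "toeplitz_form (\<lambda>x. complex_of_real c * h x * g x) m xs z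
        = complex_of_real c * toeplitz_form (\<lambda>x. h x * g x) m xs z" for g m xs z
    by (simp add: toeplitz_form_def sum_distrib_left mult_ac)
  then show ?thesis
    using assms unfolding pd_multiplier_def positive_semidefinite_def by (auto elim!: Reals_cases)
qed

lemma pd_multiplier_mult:
  assumes "pd_multiplier h1" "pd_multiplier h2"
  shows "pd_multiplier (\<lambda>x. h1 x * h2 x)"
  using assms unfolding pd_multiplier_def by (simp add: mult.assoc)

lemma pd_multiplier_sum:
  "(\<And>i. i \<in> I \<Longrightarrow> pd_multiplier (h i)) \<Longrightarrow> pd_multiplier (\<lambda>x. \<Sum>i\<in>I. h i x)"
  by (induction I rule: infinite_finite_induct) (simp_all add: pd_multiplier_zero pd_multiplier_add)

lemma pd_multiplier_prod:
  "(\<And>i. i \<in> I \<Longrightarrow> pd_multiplier (h i)) \<Longrightarrow> pd_multiplier (\<lambda>x. \<Prod>i\<in>I. h i x)"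
  by (induction I rule: infinite_finite_induct) (simp_all add: pd_multiplier_const_one pd_multiplier_mult)

lemma pd_multiplier_power: "pd_multiplier h \<Longrightarrow> pd_multiplier (\<lambda>x. h x ^ N)"
  by (induction N) (simp_all add: pd_multiplier_const_one pd_multiplier_mult)

lemma pd_multiplier_cos: "pd_multiplier (\<lambda>x. complex_of_real (cos (t * x)))"
proof -
  have "pd_multiplier (\<lambda>x. complex_of_real (1/2) * cis (t * x) + complex_of_real (1/2) * cis ((-t) * x))"
    by (intro pd_multiplier_add pd_multiplier_scale pd_multiplier_cis) auto
  moreover have "complex_of_real (1/2) * cis (t * x) + complex_of_real (1/2) * cis ((-t) * x)
                 = complex_of_real (cos (t * x))" for x
    by (simp add: complex_eq_iff)
  ultimately show ?thesis
    by simp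
qed

lemma pd_multiplier_geometric:
  assumes "0 \<le> b" "b < 1"
  shows "pd_multiplier (\<lambda>x. 1 / (1 - complex_of_real b * cis x))"
proof (rule pd_multiplier_LIMSEQ)
  show "(\<lambda>N. \<Sum>j<N. complex_of_real (b ^ j) * cis (real j * x)) \<longlonglongrightarrow> 1 / (1 - complex_of_real b * cis x)" for x
  proof -
    have "norm (complex_of_real b * cis x) < 1"
      using assms by (simp add: norm_mult)
    from geometric_sums[OF this] show ?thesis
      by (simp add: sums_def power_mult_distrib Complex.DeMoivre)
  qed
  show "pd_multiplier (\<lambda>x. \<Sum>j<N. complex_of_real (b ^ j) * cis (real j * x))" for N
    using assms by (intro pd_multiplier_sum pd_multiplier_scale pd_multiplier_cis) auto
qed

lemma pd_multiplier_gaussian: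
  assumes "0 \<le> a"
  shows "pd_multiplier (\<lambda>x. complex_of_real (exp (- a * x\<^sup>2)))"
proof (rule pd_multiplier_LIMSEQ)
  show "pd_multiplier (\<lambda>x. complex_of_real (cos (sqrt (2 * a / real N) * x)) ^ N)" for N
    by (intro pd_multiplier_power pd_multiplier_cos)
  show "(\<lambda>N. complex_of_real (cos (sqrt (2 * a / real N) * x)) ^ N) \<longlonglongrightarrow> complex_of_real (exp (- a * x\<^sup>2))" for x
  proof -
    define d where "d = sqrt (2 * a) * x"
    have "(\<lambda>N::nat. cos (d / sqrt (real N)) ^ N) \<longlonglongrightarrow> exp (- (d * d / 2))"
      by real_asymp
    moreover have "d / sqrt (real N) = sqrt (2 * a / real N) * x" for N
      by (simp add: d_def real_sqrt_divide)
    moreover have "d * d / 2 = a * x\<^sup>2"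
      using assms by (simp add: d_def power2_eq_square algebra_simps)
    ultimately show ?thesis
      by (simp flip: of_real_power add: tendsto_of_real)
  qed
qed

lemma pd_multiplier_inverse_qpoch:
  assumes "0 \<le> y" "y < 1" "0 < q" "q < 1"
  shows "pd_multiplier (\<lambda>x. 1 / qpoch_inf (complex_of_real y * cis x) q)"
proof (rule pd_multiplier_LIMSEQ)
  have "y * q ^ k \<le> y" for k
    using assms by (simp add: mult_left_le power_le_one)
  then show "pd_multiplier (\<lambda>x. \<Prod>k<N. 1 / (1 - complex_of_real (y * q ^ k) * cis x))" for N
    using assms by (intro pd_multiplier_prod pd_multiplier_geometric) (auto intro: le_less_trans)
  show "(\<lambda>N. \<Prod>k<N. 1 / (1 - complex_of_real (y * q ^ k) * cis x))
          \<longlonglongrightarrow> 1 / qpoch_inf (complex_of_real y * cis x) q" for x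
  proof -
    have "qpoch_inf (complex_of_real y * cis x) q \<noteq> 0"
      using assms by (intro qpoch_inf_nonzero) (auto simp: norm_mult)
    then have "(\<lambda>N. 1 / (\<Prod>k<N. 1 - complex_of_real y * cis x * complex_of_real q ^ k))
                 \<longlonglongrightarrow> 1 / qpoch_inf (complex_of_real y * cis x) q"
      by (intro tendsto_intros qpoch_inf_LIMSEQ assms)
    then show ?thesis
      by (simp add: prod_dividef mult_ac)
  qed
qed

lemma pd_multiplier_gaussian_div_qpoch:
  assumes "0 \<le> y" "y < 1" "0 < q" "q < 1"
  shows "pd_multiplier (\<lambda>x. complex_of_real (exp (x\<^sup>2 / (4 * ln q))) / qpoch_inf (complex_of_real y * cis x) q)"
proof -
  have "pd_multiplier (\<lambda>x. complex_of_real (exp (- (- 1 / (4 * ln q)) * x\<^sup>2))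
                          * (1 / qpoch_inf (complex_of_real y * cis x) q))"
    using assms by (intro pd_multiplier_mult pd_multiplier_gaussian pd_multiplier_inverse_qpoch)
      (auto simp: divide_nonpos_neg)
  then show ?thesis
    by simp
qed

lemma continuous_on_gaussian_div_qpoch:
  assumes "0 \<le> y" "y < 1" "0 < q" "q < 1"
  shows "continuous_on UNIV (\<lambda>x. complex_of_real (exp (x\<^sup>2 / (4 * ln q))) / qpoch_inf (complex_of_real y * cis x) q)"
proof -
  have "qpoch_inf (complex_of_real y * cis x) q \<noteq> 0" for x
    using assms by (intro qpoch_inf_nonzero) (auto simp: norm_mult)
  then show ?thesis
    using assms by (intro continuous_intros continuous_on_qpoch_inf_cis) auto
qed

lemma gaussian_div_qpoch_at_zero:
  assumes "0 < q" "q < 1"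
  shows "complex_of_real (exp (0\<^sup>2 / (4 * ln q))) / qpoch_inf (complex_of_real y * cis 0) q
           = complex_of_real (1 / Re (qpoch_inf (complex_of_real y) q))"
  using qpoch_inf_of_real_in_Reals[OF assms, of y] by (auto elim!: Reals_cases)

lemma qpoch_ratio_times_gaussian_le_one:
  assumes "0 \<le> y" "y < 1" "0 < q" "q < 1"
  shows "0 \<le> Re (qpoch_inf (complex_of_real y) q) / norm (qpoch_inf (complex_of_real y * cis x) q)
                * exp (x\<^sup>2 / (4 * ln q))
     \<and> Re (qpoch_inf (complex_of_real y) q) / norm (qpoch_inf (complex_of_real y * cis x) q)
                * exp (x\<^sup>2 / (4 * ln q)) \<le> 1"
proof -
  let ?r = "Re (qpoch_inf (complex_of_real y) q)"
  have "0 < ?r"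
    using assms by (rule Re_qpoch_inf_of_real_pos)
  moreover have "?r \<le> norm (qpoch_inf (complex_of_real y * cis x) q)"
    using Re_qpoch_inf_norm_le[of q "complex_of_real y * cis x"] assms by (simp add: norm_mult)
  moreover have "exp (x\<^sup>2 / (4 * ln q)) \<le> 1"
    using assms by (simp add: divide_nonneg_neg)
  ultimately show ?thesis
    by (intro conjI mult_nonneg_nonneg mult_le_one) (auto simp: divide_le_eq_1)
qed

theorem theorem2p1:
  fixes n :: nat and y q :: "nat \<Rightarrow> real"
  assumes hy: "\<And>l. 1 \<le> l \<Longrightarrow> l \<le> n \<Longrightarrow> 0 < y l \<and> y l < 1"
      and hq: "\<And>l. 1 \<le> l \<Longrightarrow> l \<le> n \<Longrightarrow> 0 < q l \<and> q l < 1"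
  defines "F \<equiv> (\<lambda>x::real. \<Prod>l=1..n.
      complex_of_real (exp (x\<^sup>2 / (4 * ln (q l))))
        / qpoch_inf (complex_of_real (y l) * cis x) (q l))"
  shows "positive_definite F \<and>
         (\<forall>(m::nat) (xs::nat \<Rightarrow> real) (z::nat \<Rightarrow> complex).
           (\<Sum>j<m. \<Sum>k<m. F (xs j - xs k) * z j * cnj (z k)) \<in> \<real> \<and>
           Re (\<Sum>j<m. \<Sum>k<m. F (xs j - xs k) * z j * cnj (z k)) \<ge> 0) \<and>
         (\<forall>x::real. (\<Prod>l=1..n.
           Re (qpoch_inf (complex_of_real (y l)) (q l))
             / cmod (qpoch_inf (complex_of_real (y l) * cis x) (q l))
             * exp (x\<^sup>2 / (4 * ln (q l)))) \<le> 1)"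
proof -
  have y: "0 \<le> y l" "y l < 1" and q: "0 < q l" "q l < 1" if "l \<in> {1..n}" for l
    using hy hq that by (auto simp: less_imp_le)
  have "pd_multiplier F"
    unfolding F_def using y q by (intro pd_multiplier_prod pd_multiplier_gaussian_div_qpoch)
  then have "positive_semidefinite F"
    by (rule pd_multiplier_imp_positive_semidefinite)
  moreover have "continuous_on UNIV F"
    unfolding F_def using y q by (intro continuous_on_prod continuous_on_gaussian_div_qpoch)
  moreover have "F 0 = complex_of_real (\<Prod>l=1..n. 1 / Re (qpoch_inf (complex_of_real (y l)) (q l)))"
    unfolding F_def of_real_prod using q by (intro prod.cong refl gaussian_div_qpoch_at_zero)
  moreover have "0 < (\<Prod>l=1..n. 1 / Re (qpoch_inf (complex_of_real (y l)) (q l)))"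
    using y q by (intro prod_pos) (simp add: Re_qpoch_inf_of_real_pos)
  moreover have "(\<Prod>l=1..n. Re (qpoch_inf (complex_of_real (y l)) (q l))
                    / cmod (qpoch_inf (complex_of_real (y l) * cis x) (q l))
                    * exp (x\<^sup>2 / (4 * ln (q l)))) \<le> 1" for x
    using y q by (intro prod_le_1 qpoch_ratio_times_gaussian_le_one)
  ultimately show ?thesis
    unfolding positive_definite_def positive_semidefinite_def toeplitz_form_def
    by (simp only: Re_complex_of_real Im_complex_of_real) blast
qed

end
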